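(* Let $H$ be a complex Hilbert space and let $\varphi_n,\psi_n\in C[0,1]$ ($n\ge1$) be real-valued with $\varphi_n\to1$ and $\psi_n\to0$ (pointwise on $[0,1]$) as $n\to\infty$. Then for every $t\in[0,1]$, $\lim_{n\to\infty}n_t(\varphi_n,\psi_n;H)=\frac12$.
   Context: $S_1(H)$ is the unit sphere of $H$; for real $\varphi,\psi$ on $[0,1]$, $\omega_t(\varphi,\psi;A)=\sup_{x\in S_1(H)}|\langle(\varphi(t)A+\psi(t)A^* )x,x\rangle|$, and the weighted numerical index is $n_t(\varphi,\psi;H)=\inf\{\omega_t(\varphi,\psi;A):A\in\mathbb{B}(H),\ \|A\|=1\}$. *)

theory Defs
  imports "HOL-Analysis.Analysis"
begin

text \<open>The library only provides real inner product spaces, so we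
introduce a type class of complex Hilbert spaces: a real Banach space carrying a complex
scalar multiplication compatible with the real one, and a complex inner product (linear in
the first argument, conjugate symmetric, positive definite) inducing the norm.\<close>

class chilbert_space = banach +
  fixes scaleC :: "complex \<Rightarrow> 'a \<Rightarrow> 'a"
  fixes cinner :: "'a \<Rightarrow> 'a \<Rightarrow> complex"
  assumes scaleC_add_right: "scaleC a (x + y) = scaleC a x + scaleC a y"
  and scaleC_add_left: "scaleC (a + b) x = scaleC a x + scaleC b x"
  and scaleC_scaleC: "scaleC a (scaleC b x) = scaleC (a * b) x"
  and scaleC_one: "scaleC 1 x = x"
  and scaleR_scaleC: "scaleR r x = scaleC (complex_of_real r) x"
  and cinner_commute: "cinner x y = cnj (cinner y x)"
  and cinner_add_left: "cinner (x + y) z = cinner x z + cinner y z"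
  and cinner_scaleC_left: "cinner (scaleC a x) y = a * cinner x y"
  and cinner_self_real: "Im (cinner x x) = 0"
  and cinner_self_nonneg: "0 \<le> Re (cinner x x)"
  and cinner_self_eq_zero: "cinner x x = 0 \<longleftrightarrow> x = 0"
  and norm_eq_sqrt_cinner: "norm x = sqrt (Re (cinner x x))"

definition bounded_clinear :: "('a::chilbert_space \<Rightarrow> 'a) \<Rightarrow> bool" where
  "bounded_clinear A \<longleftrightarrow> bounded_linear A \<and> (\<forall>c x. A (scaleC c x) = scaleC c (A x))"

text \<open>Hilbert space adjoint (unique by nondegeneracy; exists by Riesz).\<close>
definition cadjoint :: "('a::chilbert_space \<Rightarrow> 'a) \<Rightarrow> ('a \<Rightarrow> 'a)" where
  "cadjoint A = (SOME B. \<forall>x y. cinner (A x) y = cinner x (B y))"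

definition weighted_numerical_radius ::
  "(real \<Rightarrow> real) \<Rightarrow> (real \<Rightarrow> real) \<Rightarrow> real \<Rightarrow> ('a::chilbert_space \<Rightarrow> 'a) \<Rightarrow> real" where
  "weighted_numerical_radius \<phi> \<psi> t A =
     (SUP x\<in>{x::'a. norm x = 1}.
        cmod (cinner (scaleR (\<phi> t) (A x) + scaleR (\<psi> t) (cadjoint A x)) x))"

definition weighted_numerical_index ::
  "'a::chilbert_space itself \<Rightarrow> (real \<Rightarrow> real) \<Rightarrow> (real \<Rightarrow> real) \<Rightarrow> real \<Rightarrow> real" where
  "weighted_numerical_index _ \<phi> \<psi> t =
     (INF A\<in>{A::'a \<Rightarrow> 'a. bounded_clinear A \<and> onorm A = 1}. weighted_numerical_radius \<phi> \<psi> t A)"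

end

theory Submission
  imports Defs
begin

text \<open>Write \<open>q = \<langle>Ax, x\<rangle>\<close>. Since \<open>\<langle>A\<^sup>*x, x\<rangle> = conj q\<close>, the weighted form
\<open>\<langle>(aA + bA\<^sup>*)x, x\<rangle> = a q + b conj q\<close> has modulus between \<open>(|a| - |b|) |q|\<close> and
\<open>(|a| + |b|) |q|\<close>. By polarization \<open>\<parallel>A\<parallel> \<le> 2 w(A)\<close> for the numerical radius \<open>w\<close>, so every
\<open>A\<close> of norm one has weighted radius at least \<open>(|\<phi>(t)| - |\<psi>(t)|)/2\<close>. The rank-one operator
\<open>x \<mapsto> \<langle>x, e\<^sub>1\<rangle> e\<^sub>2\<close> with orthonormal \<open>e\<^sub>1, e\<^sub>2\<close> has norm one and numerical radius
\<open>1/2\<close>, so the index is at most \<open>(|\<phi>(t)| + |\<psi>(t)|)/2\<close>. Both bounds tend to \<open>1/2\<close>.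
As the adjoint is introduced by Hilbert choice, its existence (the Riesz representation
theorem) has to be proved first.\<close>

section \<open>Algebra of the complex inner product\<close>

lemma cinner_zero_left [simp]: "cinner (0::'a::chilbert_space) y = 0"
  using cinner_add_left[of 0 0 y] by simp

lemma cinner_zero_right [simp]: "cinner (x::'a::chilbert_space) 0 = 0"
  using cinner_commute[of x 0] by simp

lemma cinner_add_right: "cinner (x::'a::chilbert_space) (y + z) = cinner x y + cinner x z"
  by (subst (1 2 3) cinner_commute) (simp add: cinner_add_left)

lemma cinner_scaleC_right: "cinner (x::'a::chilbert_space) (scaleC a y) = cnj a * cinner x y"
  by (subst (1 2) cinner_commute) (simp add: cinner_scaleC_left)

lemma cinner_minus_left: "cinner (- (x::'a::chilbert_space)) y = - cinner x y"
  using cinner_add_left[of x "- x" y] by (simp add: add_eq_0_iff)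

lemma cinner_minus_right: "cinner (x::'a::chilbert_space) (- y) = - cinner x y"
  using cinner_add_right[of x y "- y"] by (simp add: add_eq_0_iff)

lemma cinner_diff_left: "cinner ((x::'a::chilbert_space) - y) z = cinner x z - cinner y z"
  unfolding diff_conv_add_uminus by (simp only: cinner_add_left cinner_minus_left)

lemma cinner_diff_right: "cinner (x::'a::chilbert_space) (y - z) = cinner x y - cinner x z"
  unfolding diff_conv_add_uminus by (simp only: cinner_add_right cinner_minus_right)

lemma cinner_scaleR_left: "cinner (scaleR r (x::'a::chilbert_space)) y = of_real r * cinner x y"
  by (simp add: scaleR_scaleC cinner_scaleC_left)

lemma cinner_scaleR_right: "cinner (x::'a::chilbert_space) (scaleR r y) = of_real r * cinner x y"
  by (simp add: scaleR_scaleC cinner_scaleC_right)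

lemma cinner_self: "cinner (x::'a::chilbert_space) x = of_real ((norm x)\<^sup>2)"
  using norm_eq_sqrt_cinner[of x] cinner_self_nonneg[of x] cinner_self_real[of x]
  by (simp add: complex_eq_iff)

lemma power2_norm_eq_Re_cinner: "(norm (x::'a::chilbert_space))\<^sup>2 = Re (cinner x x)"
  by (simp add: cinner_self)

lemma power2_norm_add:
  "(norm ((x::'a::chilbert_space) + y))\<^sup>2 = (norm x)\<^sup>2 + (norm y)\<^sup>2 + 2 * Re (cinner x y)"
  using cinner_commute[of y x]
  by (simp add: power2_norm_eq_Re_cinner cinner_add_left cinner_add_right)

lemma power2_norm_diff:
  "(norm ((x::'a::chilbert_space) - y))\<^sup>2 = (norm x)\<^sup>2 + (norm y)\<^sup>2 - 2 * Re (cinner x y)"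
  using cinner_commute[of y x]
  by (simp add: power2_norm_eq_Re_cinner cinner_diff_left cinner_diff_right)

lemma parallelogram_law:
  "(norm ((x::'a::chilbert_space) + y))\<^sup>2 + (norm (x - y))\<^sup>2 = 2 * (norm x)\<^sup>2 + 2 * (norm y)\<^sup>2"
  by (simp add: power2_norm_add power2_norm_diff)

lemma norm_scaleC: "norm (scaleC c (x::'a::chilbert_space)) = cmod c * norm x"
proof -
  have "cinner (scaleC c x) (scaleC c x) = (c * cnj c) * cinner x x"
    by (simp add: cinner_scaleC_left cinner_scaleC_right)
  also have "\<dots> = of_real ((cmod c * norm x)\<^sup>2)"
    by (simp add: cinner_self complex_norm_square[symmetric] power_mult_distrib)
  finally have "of_real ((norm (scaleC c x))\<^sup>2) = (of_real ((cmod c * norm x)\<^sup>2) :: complex)"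
    by (simp only: cinner_self)
  then have "(norm (scaleC c x))\<^sup>2 = (cmod c * norm x)\<^sup>2"
    by (simp only: of_real_eq_iff)
  then show ?thesis by (simp add: power2_eq_iff_nonneg)
qed

lemma Re_cinner_cauchy_schwarz: "\<bar>Re (cinner (x::'a::chilbert_space) y)\<bar> \<le> norm x * norm y"
proof (cases "y = 0")
  case False
  let ?r = "Re (cinner x y)"
  have ny: "norm y > 0" using False by simp
  define t where "t = - ?r / (norm y)\<^sup>2"
  have "0 \<le> (norm (x + scaleR t y))\<^sup>2" by simp
  also have "\<dots> = (norm x)\<^sup>2 + t\<^sup>2 * (norm y)\<^sup>2 + 2 * t * ?r"
    by (simp add: power2_norm_add cinner_scaleR_right power_mult_distrib power2_abs)
  also have "\<dots> = (norm x)\<^sup>2 - ?r\<^sup>2 / (norm y)\<^sup>2"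
    using ny by (simp add: t_def field_simps power2_eq_square)
  finally have "\<bar>?r\<bar>\<^sup>2 \<le> (norm x * norm y)\<^sup>2"
    using ny by (simp add: field_simps power_mult_distrib)
  then show ?thesis by (rule power2_le_imp_le) simp
qed simp

lemma norm_cinner_cauchy_schwarz: "cmod (cinner (x::'a::chilbert_space) y) \<le> norm x * norm y"
proof (cases "cinner x y = 0")
  case False
  define u where "u = cnj (cinner x y) / of_real (cmod (cinner x y))"
  have "cmod u = 1" using False by (simp add: u_def norm_divide)
  have "cmod (cinner x y) = Re (cinner (scaleC u x) y)"
    using False by (simp add: u_def cinner_scaleC_left complex_norm_square[symmetric]
        power2_eq_square field_simps)
  also have "\<dots> \<le> norm (scaleC u x) * norm y" using Re_cinner_cauchy_schwarz[of "scaleC u x" y] by simp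
  also have "\<dots> = norm x * norm y" by (simp add: norm_scaleC \<open>cmod u = 1\<close>)
  finally show ?thesis .
qed simp

section \<open>The Riesz representation theorem and the adjoint\<close>

lemma power2_norm_diff_le_of_convex:
  fixes S :: "'a::chilbert_space set"
  assumes "convex S" "x \<in> S" "y \<in> S" "0 \<le> d" "\<And>z. z \<in> S \<Longrightarrow> d \<le> norm z"
  shows "(norm (x - y))\<^sup>2 \<le> 2 * ((norm x)\<^sup>2 - d\<^sup>2) + 2 * ((norm y)\<^sup>2 - d\<^sup>2)"
proof -
  have "scaleR (1/2) x + scaleR (1/2) y \<in> S"
    using assms(1-3) by (rule convexD) auto
  then have "2 * d \<le> norm (x + y)"
    using assms(5) by (fastforce simp: scaleR_add_right[symmetric])
  then have "4 * d\<^sup>2 \<le> (norm (x + y))\<^sup>2"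
    using power_mono[of "2 * d" "norm (x + y)" 2] assms(4) by (simp add: power_mult_distrib)
  then show ?thesis using parallelogram_law[of x y] by argo
qed

lemma exists_min_norm_point:
  fixes S :: "'a::chilbert_space set"
  assumes "closed S" "convex S" "S \<noteq> {}"
  obtains z where "z \<in> S" "\<And>y. y \<in> S \<Longrightarrow> norm z \<le> norm y"
proof -
  define d where "d = Inf (norm ` S)"
  have bdd: "bdd_below (norm ` S)" by (rule bdd_belowI[of _ 0]) auto
  have d_le: "d \<le> norm y" if "y \<in> S" for y
    unfolding d_def using bdd that by (simp add: cInf_lower)
  have d0: "0 \<le> d"
    unfolding d_def using assms(3) by (intro cInf_greatest) auto
  have "d \<in> closure (norm ` S)"
    unfolding d_def using assms(3) bdd by (intro closure_contains_Inf) auto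
  then obtain u where "\<And>n. u n \<in> norm ` S" "u \<longlonglongrightarrow> d"
    unfolding closure_sequential by blast
  moreover from this(1) have "\<forall>n. \<exists>x. x \<in> S \<and> norm x = u n" by (metis imageE)
  then obtain xs where xs: "\<And>n. xs n \<in> S \<and> norm (xs n) = u n" by metis
  ultimately have norm_lim: "(\<lambda>n. norm (xs n)) \<longlonglongrightarrow> d" by simp
  have excess: "(\<lambda>n. (norm (xs n))\<^sup>2 - d\<^sup>2) \<longlonglongrightarrow> 0"
    using tendsto_diff[OF tendsto_power[OF norm_lim, of 2] tendsto_const[of "d\<^sup>2"]] by simp
  have "Cauchy xs"
  proof (rule metric_CauchyI)
    fix e :: real assume "e > 0"
    then have "\<forall>\<^sub>F n in sequentially. (norm (xs n))\<^sup>2 - d\<^sup>2 < e\<^sup>2 / 4"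
      using excess by (intro order_tendstoD) auto
    then obtain N where N: "\<And>n. n \<ge> N \<Longrightarrow> (norm (xs n))\<^sup>2 - d\<^sup>2 < e\<^sup>2 / 4"
      unfolding eventually_sequentially by blast
    have "dist (xs m) (xs n) < e" if "m \<ge> N" "n \<ge> N" for m n
    proof -
      have "(norm (xs m - xs n))\<^sup>2
          \<le> 2 * ((norm (xs m))\<^sup>2 - d\<^sup>2) + 2 * ((norm (xs n))\<^sup>2 - d\<^sup>2)"
        by (rule power2_norm_diff_le_of_convex[OF assms(2) _ _ d0]) (use xs d_le in auto)
      then have "(norm (xs m - xs n))\<^sup>2 < e\<^sup>2" using N[OF that(1)] N[OF that(2)] by argo
      then show ?thesis using \<open>e > 0\<close> by (simp add: dist_norm power_less_imp_less_base)
    qed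
    then show "\<exists>N. \<forall>m\<ge>N. \<forall>n\<ge>N. dist (xs m) (xs n) < e" by blast
  qed
  then obtain z where lim: "xs \<longlonglongrightarrow> z" using Cauchy_convergent_iff convergent_def by blast
  have "z \<in> S" using closed_sequentially[OF assms(1) _ lim] xs by blast
  moreover have "norm z = d"
    using tendsto_norm[OF lim] norm_lim by (rule LIMSEQ_unique)
  ultimately show ?thesis using that d_le by simp
qed

lemma cinner_eq_zero_if_norm_minimal:
  fixes z k :: "'a::chilbert_space"
  assumes min: "\<And>c. norm z \<le> norm (z - scaleC c k)"
  shows "cinner z k = 0"
proof (rule ccontr)
  let ?c = "cinner z k"
  assume "?c \<noteq> 0"
  then have "k \<noteq> 0" by auto
  then have nk: "norm k > 0" by simp
  define c where "c = ?c / of_real ((norm k)\<^sup>2)"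
  have "cnj c * ?c = of_real ((cmod ?c)\<^sup>2 / (norm k)\<^sup>2)"
    by (simp add: c_def complex_norm_square[symmetric] mult.commute)
  moreover have "(cmod c * norm k)\<^sup>2 = (cmod ?c)\<^sup>2 / (norm k)\<^sup>2"
    using nk by (simp add: c_def norm_divide norm_mult norm_power power_mult_distrib field_simps power2_eq_square)
  ultimately have "(norm (z - scaleC c k))\<^sup>2 = (norm z)\<^sup>2 - (cmod ?c)\<^sup>2 / (norm k)\<^sup>2"
    by (simp add: power2_norm_diff norm_scaleC cinner_scaleC_right)
  moreover have "(norm z)\<^sup>2 \<le> (norm (z - scaleC c k))\<^sup>2"
    using min[of c] by (simp add: power_mono)
  moreover have "(cmod ?c)\<^sup>2 / (norm k)\<^sup>2 > 0" using \<open>?c \<noteq> 0\<close> nk by simp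
  ultimately show False by linarith
qed

lemma riesz_representation:
  fixes f :: "'a::chilbert_space \<Rightarrow> complex"
  assumes f: "bounded_linear f" and f_scaleC: "\<And>c x. f (scaleC c x) = c * f x"
  obtains z where "\<And>x. f x = cinner x z"
proof (cases "\<forall>x. f x = 0")
  case True
  with that[of 0] show ?thesis by simp
next
  case False
  then obtain u where "f u \<noteq> 0" by blast
  interpret f: bounded_linear f by (fact f)
  let ?M = "{x. f x = 1}"
  have "closed ?M" using linear_continuous_on[OF f] by (intro closed_Collect_eq) auto
  moreover have "convex ?M"
  proof (rule convexI)
    fix x y :: 'a and a b :: real
    assume "x \<in> ?M" "y \<in> ?M" "a + b = 1"
    then have "f (scaleR a x + scaleR b y) = of_real a + of_real b"
      by (simp add: f.add f.scaleR scaleR_conv_of_real)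
    also have "\<dots> = 1" using \<open>a + b = 1\<close> by (metis of_real_1 of_real_add)
    finally show "scaleR a x + scaleR b y \<in> ?M" by simp
  qed
  moreover have "scaleC (1 / f u) u \<in> ?M" using \<open>f u \<noteq> 0\<close> by (simp add: f_scaleC)
  ultimately obtain z0 where "z0 \<in> ?M" and z0_min: "\<And>y. y \<in> ?M \<Longrightarrow> norm z0 \<le> norm y"
    using exists_min_norm_point[of ?M] by blast
  then have "f z0 = 1" by simp
  then have "z0 \<noteq> 0" by auto
  have orth: "cinner z0 k = 0" if "f k = 0" for k
  proof (rule cinner_eq_zero_if_norm_minimal)
    fix c
    have "z0 - scaleC c k \<in> ?M" using \<open>f z0 = 1\<close> that by (simp add: f.diff f_scaleC)
    then show "norm z0 \<le> norm (z0 - scaleC c k)" by (rule z0_min)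
  qed
  show ?thesis
  proof (rule that)
    fix x
    have "cinner z0 (x - scaleC (f x) z0) = 0"
      using \<open>f z0 = 1\<close> by (intro orth) (simp add: f.diff f_scaleC)
    then have "cinner (x - scaleC (f x) z0) z0 = 0" by (metis cinner_commute complex_cnj_zero)
    then have "cinner x z0 = f x * of_real ((norm z0)\<^sup>2)"
      by (simp add: cinner_diff_left cinner_scaleC_left cinner_self)
    then show "f x = cinner x (scaleC (of_real (1 / (norm z0)\<^sup>2)) z0)"
      using \<open>z0 \<noteq> 0\<close> by (simp add: cinner_scaleC_right)
  qed
qed

lemma bounded_clinear_bounded_linear: "bounded_clinear A \<Longrightarrow> bounded_linear A"
  by (simp add: bounded_clinear_def)

lemma
  assumes "bounded_clinear (A::'a::chilbert_space \<Rightarrow> 'a)"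
  shows bounded_clinear_add: "A (x + y) = A x + A y"
    and bounded_clinear_diff: "A (x - y) = A x - A y"
    and bounded_clinear_scaleR: "A (scaleR r x) = scaleR r (A x)"
    and bounded_clinear_scaleC: "A (scaleC c x) = scaleC c (A x)"
    and bounded_clinear_zero: "A 0 = 0"
proof -
  interpret bounded_linear A using assms by (rule bounded_clinear_bounded_linear)
  show "A (x + y) = A x + A y" "A (x - y) = A x - A y" "A (scaleR r x) = scaleR r (A x)" "A 0 = 0"
    by (simp_all add: add diff scaleR)
  show "A (scaleC c x) = scaleC c (A x)" using assms by (simp add: bounded_clinear_def)
qed

lemma cinner_cadjoint:
  assumes A: "bounded_clinear (A::'a::chilbert_space \<Rightarrow> 'a)"
  shows "cinner (A x) y = cinner x (cadjoint A y)"
proof -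
  have representable: "\<exists>z. \<forall>x. cinner (A x) y = cinner x z" for y
  proof -
    have "bounded_linear (\<lambda>x. cinner (A x) y)"
    proof (rule bounded_linear_intro[where K = "onorm A * norm y"])
      show "cinner (A (x + z)) y = cinner (A x) y + cinner (A z) y" for x z
        by (simp add: bounded_clinear_add[OF A] cinner_add_left)
      show "cinner (A (scaleR r x)) y = scaleR r (cinner (A x) y)" for r x
        by (simp add: bounded_clinear_scaleR[OF A] cinner_scaleR_left scaleR_conv_of_real)
      show "norm (cinner (A x) y) \<le> norm x * (onorm A * norm y)" for x
      proof -
        have "norm (cinner (A x) y) \<le> norm (A x) * norm y" by (rule norm_cinner_cauchy_schwarz)
        also have "\<dots> \<le> onorm A * norm x * norm y"
          using onorm[OF bounded_clinear_bounded_linear[OF A]] by (simp add: mult_right_mono)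
        finally show ?thesis by (simp add: ac_simps)
      qed
    qed
    moreover have "cinner (A (scaleC c x)) y = c * cinner (A x) y" for c x
      by (simp add: bounded_clinear_scaleC[OF A] cinner_scaleC_left)
    ultimately obtain z where "\<And>x. cinner (A x) y = cinner x z" by (rule riesz_representation) blast
    then show ?thesis by blast
  qed
  have "\<exists>B. \<forall>y x. cinner (A x) y = cinner x (B y)"
    using representable by (intro choice allI) blast
  then have "\<exists>B. \<forall>x y. cinner (A x) y = cinner x (B y)" by blast
  then show ?thesis unfolding cadjoint_def by (rule someI2_ex) blast
qed

lemma cinner_cadjoint_self:
  assumes "bounded_clinear (A::'a::chilbert_space \<Rightarrow> 'a)"
  shows "cinner (cadjoint A x) x = cnj (cinner (A x) x)"
  using cinner_cadjoint[OF assms, of x x] cinner_commute[of "cadjoint A x" x] by simp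

section \<open>Numerical radius and operator norm\<close>

lemma norm_cinner_self_le_numerical_radius_bound:
  assumes A: "bounded_clinear (A::'a::chilbert_space \<Rightarrow> 'a)"
    and W: "\<And>x. norm x = 1 \<Longrightarrow> cmod (cinner (A x) x) \<le> W"
  shows "cmod (cinner (A z) z) \<le> W * (norm z)\<^sup>2"
proof (cases "z = 0")
  case True
  then show ?thesis by (simp add: bounded_clinear_zero[OF A])
next
  case False
  define u where "u = scaleR (1 / norm z) z"
  have "norm u = 1" using False by (simp add: u_def)
  have "z = scaleR (norm z) u" using False by (simp add: u_def)
  then have "cinner (A z) z = of_real ((norm z)\<^sup>2) * cinner (A u) u"
    by (metis bounded_clinear_scaleR[OF A] cinner_scaleR_left cinner_scaleR_right
        mult.assoc of_real_mult power2_eq_square)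
  then have "cmod (cinner (A z) z) = (norm z)\<^sup>2 * cmod (cinner (A u) u)"
    by (simp add: norm_mult norm_power)
  also have "\<dots> \<le> (norm z)\<^sup>2 * W" using W[OF \<open>norm u = 1\<close>] by (simp add: mult_left_mono)
  finally show ?thesis by (simp add: ac_simps)
qed

lemma norm_cinner_le_numerical_radius_bound:
  assumes A: "bounded_clinear (A::'a::chilbert_space \<Rightarrow> 'a)"
    and W: "\<And>x. norm x = 1 \<Longrightarrow> cmod (cinner (A x) x) \<le> W"
  shows "cmod (cinner (A x) y) \<le> W * ((norm x)\<^sup>2 + (norm y)\<^sup>2)"
proof -
  note self_bound = norm_cinner_self_le_numerical_radius_bound[OF A W]
  have sym: "cmod (cinner (A x) y + cinner (A y) x) \<le> W * ((norm x)\<^sup>2 + (norm y)\<^sup>2)" for x y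
  proof -
    have "cinner (A (x + y)) (x + y) - cinner (A (x - y)) (x - y)
        = 2 * (cinner (A x) y + cinner (A y) x)"
      by (simp add: bounded_clinear_add[OF A] bounded_clinear_diff[OF A] cinner_add_left
          cinner_add_right cinner_diff_left cinner_diff_right algebra_simps)
    then have "2 * cmod (cinner (A x) y + cinner (A y) x)
        \<le> cmod (cinner (A (x + y)) (x + y)) + cmod (cinner (A (x - y)) (x - y))"
      by (metis norm_mult norm_numeral norm_triangle_ineq4)
    also have "\<dots> \<le> W * (norm (x + y))\<^sup>2 + W * (norm (x - y))\<^sup>2"
      by (intro add_mono self_bound)
    also have "\<dots> = 2 * (W * ((norm x)\<^sup>2 + (norm y)\<^sup>2))"
      by (simp only: distrib_left[symmetric] parallelogram_law)
    finally show ?thesis by simp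
  qed
  have "cinner (A x) (scaleC \<i> y) + cinner (A (scaleC \<i> y)) x
      = - \<i> * (cinner (A x) y - cinner (A y) x)"
    by (simp add: bounded_clinear_scaleC[OF A] cinner_scaleC_left cinner_scaleC_right algebra_simps)
  then have antisym: "cmod (cinner (A x) y - cinner (A y) x) \<le> W * ((norm x)\<^sup>2 + (norm y)\<^sup>2)"
    using sym[of x "scaleC \<i> y"] by (simp add: norm_mult norm_scaleC)
  have "2 * cmod (cinner (A x) y)
      = cmod ((cinner (A x) y + cinner (A y) x) + (cinner (A x) y - cinner (A y) x))"
    by (simp add: norm_mult[symmetric])
  also have "\<dots> \<le> cmod (cinner (A x) y + cinner (A y) x) + cmod (cinner (A x) y - cinner (A y) x)"
    by (rule norm_triangle_ineq)
  finally show ?thesis using sym[of x y] antisym by linarith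
qed

lemma onorm_le_twice_numerical_radius_bound:
  assumes A: "bounded_clinear (A::'a::chilbert_space \<Rightarrow> 'a)"
    and W: "\<And>x. norm x = 1 \<Longrightarrow> cmod (cinner (A x) x) \<le> W" and "0 \<le> W"
  shows "onorm A \<le> 2 * W"
proof (rule onorm_bound)
  show "0 \<le> 2 * W" using \<open>0 \<le> W\<close> by simp
  show "norm (A x) \<le> 2 * W * norm x" for x
  proof (cases "A x = 0")
    case True
    then show ?thesis using \<open>0 \<le> W\<close> by simp
  next
    case False
    then have "x \<noteq> 0" using bounded_clinear_zero[OF A] by auto
    have "norm (A x) > 0" using False by simp
    define y where "y = scaleR (norm x / norm (A x)) (A x)"
    have "norm y = norm x" using \<open>norm (A x) > 0\<close> by (simp add: y_def)
    have "cinner (A x) y = of_real (norm x / norm (A x) * (norm (A x))\<^sup>2)"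
      by (simp add: y_def cinner_scaleR_right cinner_self)
    also have "\<dots> = of_real (norm x * norm (A x))"
      using \<open>norm (A x) > 0\<close> by (simp add: power2_eq_square)
    finally have "norm x * norm (A x) \<le> W * (2 * (norm x)\<^sup>2)"
      using norm_cinner_le_numerical_radius_bound[OF A W, of x y] \<open>norm y = norm x\<close>
      by (simp add: norm_mult)
    then have "norm x * norm (A x) \<le> norm x * (2 * W * norm x)"
      by (simp add: power2_eq_square ac_simps)
    then show ?thesis using \<open>x \<noteq> 0\<close> by simp
  qed
qed

section \<open>Bounds for the weighted numerical index\<close>

lemma cinner_weighted_adjoint_eq:
  assumes "bounded_clinear (A::'a::chilbert_space \<Rightarrow> 'a)"
  shows "cinner (scaleR a (A x) + scaleR b (cadjoint A x)) x
    = of_real a * cinner (A x) x + of_real b * cnj (cinner (A x) x)"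
  by (simp add: cinner_add_left cinner_scaleR_left cinner_cadjoint_self[OF assms])

lemma norm_weighted_cnj_ge: "(\<bar>a\<bar> - \<bar>b\<bar>) * cmod q \<le> cmod (of_real a * q + of_real b * cnj q)"
  using norm_diff_ineq[of "of_real a * q" "of_real b * cnj q"]
  by (simp add: norm_mult left_diff_distrib)

lemma norm_weighted_cnj_le: "cmod (of_real a * q + of_real b * cnj q) \<le> (\<bar>a\<bar> + \<bar>b\<bar>) * cmod q"
  using norm_triangle_ineq[of "of_real a * q" "of_real b * cnj q"]
  by (simp add: norm_mult distrib_right)

lemma weighted_numerical_radius_ge:
  fixes A :: "'a::chilbert_space \<Rightarrow> 'a"
  assumes A: "bounded_clinear A" and "\<exists>x::'a. norm x = 1"
  shows "(\<bar>\<phi> t\<bar> - \<bar>\<psi> t\<bar>) * onorm A / 2 \<le> weighted_numerical_radius \<phi> \<psi> t A"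
proof -
  let ?c = "\<bar>\<phi> t\<bar> - \<bar>\<psi> t\<bar>"
  let ?T = "\<lambda>x. cmod (cinner (scaleR (\<phi> t) (A x) + scaleR (\<psi> t) (cadjoint A x)) x)"
  let ?R = "weighted_numerical_radius \<phi> \<psi> t A"
  have T_eq: "?T x = cmod (of_real (\<phi> t) * cinner (A x) x + of_real (\<psi> t) * cnj (cinner (A x) x))"
    for x by (simp only: cinner_weighted_adjoint_eq[OF A])
  have "?T x \<le> (\<bar>\<phi> t\<bar> + \<bar>\<psi> t\<bar>) * onorm A" if "norm x = 1" for x
  proof -
    have "cmod (cinner (A x) x) \<le> onorm A"
      using norm_cinner_cauchy_schwarz[of "A x" x] onorm[OF bounded_clinear_bounded_linear[OF A], of x]
        that by simp
    then have "(\<bar>\<phi> t\<bar> + \<bar>\<psi> t\<bar>) * cmod (cinner (A x) x) \<le> (\<bar>\<phi> t\<bar> + \<bar>\<psi> t\<bar>) * onorm A"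
      by (simp add: mult_left_mono)
    then show ?thesis unfolding T_eq using norm_weighted_cnj_le order_trans by blast
  qed
  then have "bdd_above (?T ` {x. norm x = 1})" by (intro bdd_aboveI2) auto
  then have T_le: "?T x \<le> ?R" if "norm x = 1" for x
    unfolding weighted_numerical_radius_def using that by (intro cSUP_upper) auto
  then have "0 \<le> ?R" using assms(2) norm_ge_zero order_trans by blast
  show ?thesis
  proof (cases "?c > 0")
    case True
    have "onorm A \<le> 2 * (?R / ?c)"
    proof (rule onorm_le_twice_numerical_radius_bound[OF A])
      fix x :: 'a assume "norm x = 1"
      have "?c * cmod (cinner (A x) x) \<le> ?T x" unfolding T_eq by (rule norm_weighted_cnj_ge)
      also have "\<dots> \<le> ?R" using \<open>norm x = 1\<close> by (rule T_le)
      finally have "?c * cmod (cinner (A x) x) \<le> ?R" .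
      then show "cmod (cinner (A x) x) \<le> ?R / ?c" using True by (simp add: field_simps)
    qed (use True \<open>0 \<le> ?R\<close> in simp)
    then show ?thesis using True by (simp add: field_simps)
  next
    case False
    then have "?c * onorm A \<le> 0"
      using onorm_pos_le[OF bounded_clinear_bounded_linear[OF A]] by (simp add: mult_nonpos_nonneg)
    then show ?thesis using \<open>0 \<le> ?R\<close> by simp
  qed
qed

definition rank_one :: "'a::chilbert_space \<Rightarrow> 'a \<Rightarrow> 'a \<Rightarrow> 'a" where
  "rank_one e f v = scaleC (cinner v e) f"

lemma norm_rank_one: "norm (rank_one e f v) = cmod (cinner v e) * norm f"
  by (simp add: rank_one_def norm_scaleC)

lemma norm_rank_one_le: "norm (rank_one e f x) \<le> norm e * norm f * norm x"
  using mult_right_mono[OF norm_cinner_cauchy_schwarz[of x e], of "norm f"]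
  by (simp add: norm_rank_one ac_simps)

lemma bounded_clinear_rank_one: "bounded_clinear (rank_one e f)"
proof -
  have "bounded_linear (rank_one e f)"
  proof (rule bounded_linear_intro[where K = "norm e * norm f"])
    show "rank_one e f (x + y) = rank_one e f x + rank_one e f y" for x y
      by (simp add: rank_one_def cinner_add_left scaleC_add_left)
    show "rank_one e f (scaleR r x) = scaleR r (rank_one e f x)" for r x
      by (simp add: rank_one_def cinner_scaleR_left scaleR_scaleC scaleC_scaleC cinner_scaleC_left)
    show "norm (rank_one e f x) \<le> norm x * (norm e * norm f)" for x
      using norm_rank_one_le[of e f x] by (simp add: ac_simps)
  qed
  then show ?thesis
    by (simp add: bounded_clinear_def rank_one_def cinner_scaleC_left scaleC_scaleC)
qed

lemma onorm_rank_one: "onorm (rank_one e f) = norm e * norm f"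
proof (rule antisym)
  have bl: "bounded_linear (rank_one e f)"
    by (rule bounded_clinear_bounded_linear[OF bounded_clinear_rank_one])
  show "onorm (rank_one e f) \<le> norm e * norm f"
    by (intro onorm_bound norm_rank_one_le) simp
  show "norm e * norm f \<le> onorm (rank_one e f)"
  proof (cases "e = 0")
    case True
    then show ?thesis using onorm_pos_le[OF bl] by simp
  next
    case False
    have "norm (rank_one e f e) / norm e = norm e * norm f"
      using False by (simp add: norm_rank_one cinner_self norm_mult power2_eq_square)
    then show ?thesis using le_onorm[OF bl, of e] by simp
  qed
qed

lemma bessel_inequality_two:
  fixes e f v :: "'a::chilbert_space"
  assumes "norm e = 1" "norm f = 1" "cinner e f = 0"
  shows "(cmod (cinner v e))\<^sup>2 + (cmod (cinner v f))\<^sup>2 \<le> (norm v)\<^sup>2"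
proof -
  let ?S = "(cmod (cinner v e))\<^sup>2 + (cmod (cinner v f))\<^sup>2"
  define p where "p = scaleC (cinner v e) e + scaleC (cinner v f) f"
  have "(norm p)\<^sup>2 = ?S"
    using assms unfolding p_def power2_norm_add
    by (simp add: norm_scaleC cinner_scaleC_left cinner_scaleC_right power_mult_distrib)
  have "cinner v p = cnj (cinner v e) * cinner v e + cnj (cinner v f) * cinner v f"
    by (simp add: p_def cinner_add_right cinner_scaleC_right)
  also have "\<dots> = of_real ?S" by (simp add: complex_norm_square[symmetric] mult.commute)
  finally have "cinner v p = of_real ?S" .
  then have "cmod (cinner v p) = ?S" by (simp only: norm_of_real) simp
  then have "?S \<le> norm v * norm p"
    using norm_cinner_cauchy_schwarz[of v p] by simp
  then have "?S * ?S \<le> (norm v * norm p) * (norm v * norm p)"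
    by (intro mult_mono) auto
  also have "\<dots> = (norm v)\<^sup>2 * (norm p)\<^sup>2" by (simp add: power2_eq_square)
  also have "\<dots> = (norm v)\<^sup>2 * ?S" using \<open>(norm p)\<^sup>2 = ?S\<close> by simp
  finally have "?S * ?S \<le> (norm v)\<^sup>2 * ?S" .
  moreover have "0 \<le> ?S" by simp
  ultimately show ?thesis by (cases "?S = 0") (auto simp: mult_le_cancel_right)
qed

lemma norm_cinner_rank_one_le:
  fixes e f v :: "'a::chilbert_space"
  assumes "norm e = 1" "norm f = 1" "cinner e f = 0"
  shows "cmod (cinner (rank_one e f v) v) \<le> (norm v)\<^sup>2 / 2"
proof -
  have "cmod (cinner (rank_one e f v) v) = cmod (cinner v e) * cmod (cinner v f)"
    using cinner_commute[of f v] by (simp add: rank_one_def cinner_scaleC_left norm_mult)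
  also have "\<dots> \<le> ((cmod (cinner v e))\<^sup>2 + (cmod (cinner v f))\<^sup>2) / 2"
    using sum_squares_bound[of "cmod (cinner v e)" "cmod (cinner v f)"] by simp
  also have "\<dots> \<le> (norm v)\<^sup>2 / 2"
    using bessel_inequality_two[OF assms, of v] by simp
  finally show ?thesis .
qed

lemma weighted_numerical_radius_rank_one_le:
  fixes e f :: "'a::chilbert_space"
  assumes "norm e = 1" "norm f = 1" "cinner e f = 0"
  shows "weighted_numerical_radius \<phi> \<psi> t (rank_one e f) \<le> (\<bar>\<phi> t\<bar> + \<bar>\<psi> t\<bar>) / 2"
  unfolding weighted_numerical_radius_def
proof (rule cSUP_least)
  show "{x::'a. norm x = 1} \<noteq> {}" using assms(1) by blast
  fix x :: 'a assume "x \<in> {x. norm x = 1}"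
  then have "cmod (cinner (rank_one e f x) x) \<le> 1 / 2"
    using norm_cinner_rank_one_le[OF assms, of x] by simp
  then have "(\<bar>\<phi> t\<bar> + \<bar>\<psi> t\<bar>) * cmod (cinner (rank_one e f x) x) \<le> (\<bar>\<phi> t\<bar> + \<bar>\<psi> t\<bar>) / 2"
    using mult_left_mono[of _ "1/2" "\<bar>\<phi> t\<bar> + \<bar>\<psi> t\<bar>"] by simp
  then show "cmod (cinner (scaleR (\<phi> t) (rank_one e f x) + scaleR (\<psi> t) (cadjoint (rank_one e f) x)) x)
      \<le> (\<bar>\<phi> t\<bar> + \<bar>\<psi> t\<bar>) / 2"
    unfolding cinner_weighted_adjoint_eq[OF bounded_clinear_rank_one]
    using norm_weighted_cnj_le order_trans by blast
qed

lemma weighted_numerical_index_bounds: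
  assumes "\<exists>x y :: 'a::chilbert_space. x \<noteq> 0 \<and> y \<noteq> 0 \<and> cinner x y = 0"
  shows "(\<bar>\<phi> t\<bar> - \<bar>\<psi> t\<bar>) / 2 \<le> weighted_numerical_index TYPE('a) \<phi> \<psi> t"
    and "weighted_numerical_index TYPE('a) \<phi> \<psi> t \<le> (\<bar>\<phi> t\<bar> + \<bar>\<psi> t\<bar>) / 2"
proof -
  obtain x y :: 'a where "x \<noteq> 0" "y \<noteq> 0" "cinner x y = 0" using assms by blast
  define e where "e = scaleR (1 / norm x) x"
  define f where "f = scaleR (1 / norm y) y"
  have ef: "norm e = 1" "norm f = 1" "cinner e f = 0"
    using \<open>x \<noteq> 0\<close> \<open>y \<noteq> 0\<close> \<open>cinner x y = 0\<close>
    by (simp_all add: e_def f_def cinner_scaleR_left cinner_scaleR_right)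
  let ?S = "{A::'a \<Rightarrow> 'a. bounded_clinear A \<and> onorm A = 1}"
  have "rank_one e f \<in> ?S" using ef by (simp add: bounded_clinear_rank_one onorm_rank_one)
  have unit: "\<exists>x::'a. norm x = 1" using ef(1) by blast
  have lower: "(\<bar>\<phi> t\<bar> - \<bar>\<psi> t\<bar>) / 2 \<le> weighted_numerical_radius \<phi> \<psi> t A" if "A \<in> ?S" for A
  proof -
    from that have "bounded_clinear A" "onorm A = 1" by auto
    then show ?thesis using weighted_numerical_radius_ge[OF \<open>bounded_clinear A\<close> unit] by simp
  qed
  show "(\<bar>\<phi> t\<bar> - \<bar>\<psi> t\<bar>) / 2 \<le> weighted_numerical_index TYPE('a) \<phi> \<psi> t"
    unfolding weighted_numerical_index_def
    by (rule cINF_greatest[OF _ lower]) (use \<open>rank_one e f \<in> ?S\<close> in blast)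
  have "weighted_numerical_index TYPE('a) \<phi> \<psi> t \<le> weighted_numerical_radius \<phi> \<psi> t (rank_one e f)"
    unfolding weighted_numerical_index_def
    by (rule cINF_lower[OF bdd_belowI2[OF lower] \<open>rank_one e f \<in> ?S\<close>])
  also have "\<dots> \<le> (\<bar>\<phi> t\<bar> + \<bar>\<psi> t\<bar>) / 2"
    by (rule weighted_numerical_radius_rank_one_le[OF ef])
  finally show "weighted_numerical_index TYPE('a) \<phi> \<psi> t \<le> (\<bar>\<phi> t\<bar> + \<bar>\<psi> t\<bar>) / 2" .
qed

theorem corollary4p9:
  fixes \<phi> \<psi> :: "nat \<Rightarrow> real \<Rightarrow> real"
  assumes dim2: "\<exists>x y :: 'a::chilbert_space. x \<noteq> 0 \<and> y \<noteq> 0 \<and> cinner x y = 0"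
    and cont_phi: "\<And>n. n \<ge> 1 \<Longrightarrow> continuous_on {0..1} (\<phi> n)"
    and cont_psi: "\<And>n. n \<ge> 1 \<Longrightarrow> continuous_on {0..1} (\<psi> n)"
    and lim_phi: "\<And>t. t \<in> {0..1} \<Longrightarrow> (\<lambda>n. \<phi> n t) \<longlonglongrightarrow> 1"
    and lim_psi: "\<And>t. t \<in> {0..1} \<Longrightarrow> (\<lambda>n. \<psi> n t) \<longlonglongrightarrow> 0"
  shows "\<forall>t\<in>{0..1}. (\<lambda>n. weighted_numerical_index TYPE('a) (\<phi> n) (\<psi> n) t) \<longlonglongrightarrow> 1/2"
proof
  fix t :: real assume t: "t \<in> {0..1}"
  have "(\<lambda>n. (\<bar>\<phi> n t\<bar> - \<bar>\<psi> n t\<bar>) / 2) \<longlonglongrightarrow> (\<bar>1\<bar> - \<bar>0\<bar>) / 2"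
    by (intro tendsto_intros lim_phi[OF t] lim_psi[OF t]) simp
  then have lower: "(\<lambda>n. (\<bar>\<phi> n t\<bar> - \<bar>\<psi> n t\<bar>) / 2) \<longlonglongrightarrow> 1/2" by simp
  have "(\<lambda>n. (\<bar>\<phi> n t\<bar> + \<bar>\<psi> n t\<bar>) / 2) \<longlonglongrightarrow> (\<bar>1\<bar> + \<bar>0\<bar>) / 2"
    by (intro tendsto_intros lim_phi[OF t] lim_psi[OF t]) simp
  then have upper: "(\<lambda>n. (\<bar>\<phi> n t\<bar> + \<bar>\<psi> n t\<bar>) / 2) \<longlonglongrightarrow> 1/2" by simp
  show "(\<lambda>n. weighted_numerical_index TYPE('a) (\<phi> n) (\<psi> n) t) \<longlonglongrightarrow> 1/2"
    by (rule tendsto_sandwich[OF _ _ lower upper])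
      (intro always_eventually allI weighted_numerical_index_bounds[OF dim2])+
qed

end
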